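(* Let $a,c>0$ and $z(k)=-ak^2+ik+c$ for $k\in\mathbb{R}$, and let $\sqrt{\cdot}$ denote the principal square root. Then $$\inf_{k\in\mathbb{R}}\Re\sqrt{z(k)}=\begin{cases}\sqrt{c},&4ac\le 1,\\ \frac{1}{2\sqrt a},&4ac>1,\end{cases}\qquad \sup_{k\in\mathbb{R}}\Re\sqrt{z(k)}=\begin{cases}\frac{1}{2\sqrt a},&4ac<1,\\ \sqrt{c},&4ac\ge 1.\end{cases}$$
   Context: Here $\frac{1}{2\sqrt a}=\lim_{|k|\to\infty}\Re\sqrt{z(k)}$. *)

theory Defs
  imports "HOL-Analysis.Analysis"
begin

end

theory Submission
  imports Defs "HOL-Real_Asymp.Real_Asymp"
begin

text \<open>
  Put \<open>w = (Re (csqrt z))\<^sup>2\<close>. Comparing real and imaginary parts of \<open>(csqrt z)\<^sup>2 = z\<close> gives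
  \<open>4 w (w - Re z) = (Im z)\<^sup>2\<close>, which on the parabola \<open>Re z = c - a (Im z)\<^sup>2\<close> becomes
  \<open>4 w (c - w) = (Im z)\<^sup>2 (4 a w - 1)\<close>. Hence \<open>c - w\<close> and \<open>w - 1/(4a)\<close> never have opposite
  signs, so \<open>Re (csqrt (z k))\<close> always lies between \<open>sqrt c\<close> and \<open>1/(2 sqrt a)\<close>. The first bound
  is attained at \<open>k = 0\<close> and the second is the limit as \<open>k \<rightarrow> \<infinity>\<close>, so the two bounds are
  the infimum and the supremum, in the order determined by the sign of \<open>4ac - 1\<close>.
\<close>

lemma Re_csqrt_squared_eq: "4 * (Re (csqrt z))\<^sup>2 * ((Re (csqrt z))\<^sup>2 - Re z) = (Im z)\<^sup>2"
proof -
  obtain x y where s: "csqrt z = Complex x y"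
    by (rule complex.exhaust)
  then have "z = (Complex x y)\<^sup>2"
    by (metis power2_csqrt)
  then have re: "Re z = x\<^sup>2 - y\<^sup>2" and im: "Im z = 2 * x * y"
    by (simp_all add: power2_eq_square)
  show ?thesis
    unfolding s re im by (simp add: power2_eq_square algebra_simps)
qed

lemma Re_csqrt_pos:
  assumes "Im z \<noteq> 0 \<or> 0 < Re z"
  shows "0 < Re (csqrt z)"
proof (cases "Im z = 0")
  case True
  then have "csqrt z = of_real (sqrt (Re z))"
    using assms by (intro csqrt_of_real_nonneg) auto
  then have "Re (csqrt z) = sqrt (Re z)"
    by (simp only: Re_complex_of_real)
  with True assms show ?thesis by simp
next
  case False
  \<comment> \<open>naming \<open>Re (csqrt z)\<close> keeps the simplifier from unfolding the defining equations of \<open>csqrt\<close>\<close>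
  define r where "r = Re (csqrt z)"
  have "4 * r\<^sup>2 * (r\<^sup>2 - Re z) = (Im z)\<^sup>2"
    unfolding r_def by (rule Re_csqrt_squared_eq)
  with False have "r \<noteq> 0" by auto
  moreover have "0 \<le> r"
    unfolding r_def by (rule Re_csqrt)
  ultimately have "0 < r" by simp
  then show ?thesis by (simp only: r_def)
qed

lemma between_min_max_if_mult_nonneg:
  fixes p q x :: real
  assumes "0 \<le> (p - x) * (x - q)"
  shows "min p q \<le> x \<and> x \<le> max p q"
  using assms by (auto simp: zero_le_mult_iff)

lemma mono_real_sqrt: "mono sqrt"
  by (rule monoI) simp

lemma sqrt_one_div_four_mult: "sqrt (1 / (4 * a)) = 1 / (2 * sqrt a)"
  by (simp add: real_sqrt_divide real_sqrt_mult)

lemma Re_csqrt_parabola_between: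
  fixes a c :: real and z :: complex
  assumes "0 < a" "0 < c" and parabola: "Re z = c - a * (Im z)\<^sup>2"
  shows "min (sqrt c) (1 / (2 * sqrt a)) \<le> Re (csqrt z) \<and>
         Re (csqrt z) \<le> max (sqrt c) (1 / (2 * sqrt a))"
proof -
  define r where "r = Re (csqrt z)"
  define w where "w = r\<^sup>2"
  have "0 < r"
    unfolding r_def using assms by (intro Re_csqrt_pos) auto
  then have "0 < w" and sqrt_w: "sqrt w = r"
    unfolding w_def by simp_all
  have "4 * w * (w - Re z) = (Im z)\<^sup>2"
    unfolding w_def r_def by (rule Re_csqrt_squared_eq)
  then have balance: "4 * w * (c - w) = (Im z)\<^sup>2 * (4 * a * w - 1)"
    using parabola by (simp add: algebra_simps)
  have "(c - w) * (w - 1 / (4 * a)) = 4 * w * (c - w) * (4 * a * w - 1) / (16 * a * w)"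
    using \<open>0 < a\<close> \<open>0 < w\<close> by (simp add: field_simps)
  also have "\<dots> = (Im z)\<^sup>2 * (4 * a * w - 1)\<^sup>2 / (16 * a * w)"
    unfolding balance by (simp add: power2_eq_square)
  finally have "0 \<le> (c - w) * (w - 1 / (4 * a))"
    using \<open>0 < a\<close> \<open>0 < w\<close> by simp
  then have "min c (1 / (4 * a)) \<le> w \<and> w \<le> max c (1 / (4 * a))"
    by (rule between_min_max_if_mult_nonneg)
  then have "min (sqrt c) (sqrt (1 / (4 * a))) \<le> sqrt w \<and>
      sqrt w \<le> max (sqrt c) (sqrt (1 / (4 * a)))"
    unfolding min_of_mono[OF mono_real_sqrt] max_of_mono[OF mono_real_sqrt] by simp
  then show ?thesis
    unfolding r_def[symmetric] sqrt_w[symmetric] sqrt_one_div_four_mult[symmetric] .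
qed

lemma Re_csqrt_parabola_tendsto:
  fixes a c :: real
  assumes "0 < a"
  shows "((\<lambda>k. Re (csqrt (Complex (c - a * k\<^sup>2) k))) \<longlongrightarrow> 1 / (2 * sqrt a)) at_top"
proof -
  have Re_csqrt_eq: "Re (csqrt (Complex (c - a * k\<^sup>2) k))
      = sqrt ((sqrt ((c - a * k\<^sup>2)\<^sup>2 + k\<^sup>2) + (c - a * k\<^sup>2)) / 2)" for k
    by (simp add: cmod_def)
  have "((\<lambda>k. (sqrt ((c - a * k\<^sup>2)\<^sup>2 + k\<^sup>2) + (c - a * k\<^sup>2)) / 2) \<longlongrightarrow> 1 / (4 * a)) at_top"
    using assms by real_asymp (simp add: field_simps power2_eq_square)
  then show ?thesis
    unfolding Re_csqrt_eq sqrt_one_div_four_mult[symmetric] by (rule tendsto_real_sqrt)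
qed

lemma INF_eq_min_if_attained_and_tendsto:
  fixes f :: "'a \<Rightarrow> real"
  assumes "F \<noteq> bot" and lower: "\<And>x. min p q \<le> f x"
    and "p \<in> range f" and lim: "(f \<longlongrightarrow> q) F"
  shows "(INF x. f x) = min p q"
proof (rule antisym)
  have bdd: "bdd_below (range f)"
    using lower by (intro bdd_belowI) auto
  have "(INF x. f x) \<le> p"
    using \<open>p \<in> range f\<close> bdd by (auto intro: cINF_lower)
  moreover have "(INF x. f x) \<le> q"
    by (rule tendsto_le[OF \<open>F \<noteq> bot\<close> lim tendsto_const])
      (intro always_eventually allI cINF_lower bdd UNIV_I)
  ultimately show "(INF x. f x) \<le> min p q"
    by simp
  show "min p q \<le> (INF x. f x)"
    using lower by (intro cINF_greatest) auto
qed

lemma SUP_eq_max_if_attained_and_tendsto: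
  fixes f :: "'a \<Rightarrow> real"
  assumes "F \<noteq> bot" and upper: "\<And>x. f x \<le> max p q"
    and "p \<in> range f" and lim: "(f \<longlongrightarrow> q) F"
  shows "(SUP x. f x) = max p q"
proof (rule antisym)
  have bdd: "bdd_above (range f)"
    using upper by (intro bdd_aboveI) auto
  have "p \<le> (SUP x. f x)"
    using \<open>p \<in> range f\<close> bdd by (auto intro: cSUP_upper)
  moreover have "q \<le> (SUP x. f x)"
    by (rule tendsto_le[OF \<open>F \<noteq> bot\<close> tendsto_const lim])
      (intro always_eventually allI cSUP_upper bdd UNIV_I)
  ultimately show "max p q \<le> (SUP x. f x)"
    by simp
  show "(SUP x. f x) \<le> max p q"
    using upper by (intro cSUP_least) auto
qed

theorem mainTheorem2:
  fixes a c :: real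
  assumes "a > 0" and "c > 0"
  defines "z \<equiv> (\<lambda>k::real. - complex_of_real a * (complex_of_real k)\<^sup>2 + \<i> * complex_of_real k + complex_of_real c)"
  shows "((INF k\<in>(UNIV::real set). Re (csqrt (z k))) =
           (if 4 * a * c \<le> 1 then sqrt c else 1 / (2 * sqrt a))) \<and>
         ((SUP k\<in>(UNIV::real set). Re (csqrt (z k))) =
           (if 4 * a * c < 1 then 1 / (2 * sqrt a) else sqrt c))"
proof -
  define f where "f k = Re (csqrt (z k))" for k
  have z_eq: "z k = Complex (c - a * k\<^sup>2) k" for k
    by (simp add: z_def complex_eq_iff)
  have bounds:
    "min (sqrt c) (1 / (2 * sqrt a)) \<le> f k \<and> f k \<le> max (sqrt c) (1 / (2 * sqrt a))" for k
    unfolding f_def z_eq using assms by (intro Re_csqrt_parabola_between) auto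
  have "f 0 = sqrt c"
    unfolding f_def z_eq using \<open>c > 0\<close> by simp
  then have attained: "sqrt c \<in> range f"
    by (metis rangeI)
  have lim: "(f \<longlongrightarrow> 1 / (2 * sqrt a)) at_top"
    unfolding f_def z_eq using \<open>a > 0\<close> by (rule Re_csqrt_parabola_tendsto)
  have "sqrt c \<le> 1 / (2 * sqrt a) \<longleftrightarrow> 4 * a * c \<le> 1"
    and "sqrt c < 1 / (2 * sqrt a) \<longleftrightarrow> 4 * a * c < 1"
    unfolding sqrt_one_div_four_mult[symmetric] using \<open>a > 0\<close> by (simp_all add: field_simps)
  moreover have "(INF k. f k) = min (sqrt c) (1 / (2 * sqrt a))"
    using bounds attained lim by (intro INF_eq_min_if_attained_and_tendsto) auto
  moreover have "(SUP k. f k) = max (sqrt c) (1 / (2 * sqrt a))"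
    using bounds attained lim by (intro SUP_eq_max_if_attained_and_tendsto) auto
  ultimately show ?thesis
    unfolding f_def by (auto simp: min_def max_def)
qed

end
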